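(* Let $B_0=\langle a,e,f\mid e^2=e,\ f^2=f,\ ef=fe=0,\ ea=af=a\rangle=\{0,a,e,f\}$. Then (i) the pseudovariety $\llbracket B_0\rrbracket$ is strictly join irreducible; (ii) $\llbracket B_0\rrbracket$ is not join irreducible; (iii) $\llbracket B_0^I\rrbracket$ is not strictly join irreducible.
   Context: $B_0$ is the four-element semigroup with zero $0$ given by the presentation (all products not determined by the relations are $0$). $B_0^I$ is $B_0$ with an external identity adjoined. A pseudovariety is a class of finite semigroups closed under finite direct products, subsemigroups and homomorphic images; $\llbracket S\rrbracket$ is the pseudovariety generated by $S$. In the lattice of pseudovarieties, $\mathbf{V}$ is join irreducible if $\mathbf{V}\subseteq\bigvee\mathscr{X}$ implies $\mathbf{V}\subseteq\mathbf{X}$ for some $\mathbf{X}\in\mathscr{X}$, and strictly join irreducible if $\mathbf{V}=\bigvee\mathscr{X}$ implies $\mathbf{V}\in\mathscr{X}$ (for every set $\mathscr{X}$ of pseudovarieties). *)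

theory Defs
  imports Main
begin

text \<open>Pseudovarieties are classes of finite semigroups; we represent them as sets of
  semigroups whose carrier lies in nat (every finite semigroup has an isomorphic copy
  there), closed under isomorphic copies, subsemigroups, finite direct products and
  homomorphic images.\<close>

type_synonym 'a sgrp = "'a set \<times> ('a \<Rightarrow> 'a \<Rightarrow> 'a)"

definition semigroup_on :: "'a sgrp \<Rightarrow> bool" where
  "semigroup_on S \<longleftrightarrow> fst S \<noteq> {} \<and>
     (\<forall>x\<in>fst S. \<forall>y\<in>fst S. snd S x y \<in> fst S) \<and>
     (\<forall>x\<in>fst S. \<forall>y\<in>fst S. \<forall>z\<in>fst S. snd S (snd S x y) z = snd S x (snd S y z))"

definition finite_sg :: "'a sgrp \<Rightarrow> bool" where
  "finite_sg S \<longleftrightarrow> semigroup_on S \<and> finite (fst S)"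

definition sg_hom :: "'a sgrp \<Rightarrow> 'b sgrp \<Rightarrow> ('a \<Rightarrow> 'b) \<Rightarrow> bool" where
  "sg_hom S T h \<longleftrightarrow> h ` fst S \<subseteq> fst T \<and>
     (\<forall>x\<in>fst S. \<forall>y\<in>fst S. h (snd S x y) = snd T (h x) (h y))"

definition sg_prod :: "'a sgrp \<Rightarrow> 'b sgrp \<Rightarrow> ('a \<times> 'b) sgrp" where
  "sg_prod S T = (fst S \<times> fst T,
     \<lambda>p q. (snd S (fst p) (fst q), snd T (snd p) (snd q)))"

text \<open>Closure under (isomorphic copies of) subsemigroups of binary direct products
  together with nonemptiness gives closure under isomorphism, subsemigroups and all
  finite direct products (the empty product, the trivial semigroup, arises as a
  homomorphic image).\<close>
definition pseudovariety :: "nat sgrp set \<Rightarrow> bool" where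
  "pseudovariety V \<longleftrightarrow> V \<noteq> {} \<and> (\<forall>S\<in>V. finite_sg S) \<and>
     (\<forall>S\<in>V. \<forall>T\<in>V. \<forall>U. finite_sg U \<and>
        (\<exists>h. sg_hom U (sg_prod S T) h \<and> inj_on h (fst U)) \<longrightarrow> U \<in> V) \<and>
     (\<forall>S\<in>V. \<forall>T. finite_sg T \<and> (\<exists>h. sg_hom S T h \<and> h ` fst S = fst T) \<longrightarrow> T \<in> V)"

definition pv_gen :: "nat sgrp \<Rightarrow> nat sgrp set" where
  "pv_gen S = \<Inter>{V. pseudovariety V \<and> S \<in> V}"

definition pv_join :: "nat sgrp set set \<Rightarrow> nat sgrp set" where
  "pv_join X = \<Inter>{W. pseudovariety W \<and> \<Union>X \<subseteq> W}"

definition join_irreducible :: "nat sgrp set \<Rightarrow> bool" where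
  "join_irreducible V \<longleftrightarrow> (\<forall>X. (\<forall>W\<in>X. pseudovariety W) \<longrightarrow>
      V \<subseteq> pv_join X \<longrightarrow> (\<exists>W\<in>X. V \<subseteq> W))"

definition strictly_join_irreducible :: "nat sgrp set \<Rightarrow> bool" where
  "strictly_join_irreducible V \<longleftrightarrow> (\<forall>X. (\<forall>W\<in>X. pseudovariety W) \<longrightarrow>
      V = pv_join X \<longrightarrow> V \<in> X)"

text \<open>B0 = {0,a,e,f} encoded as 0,1,2,3 (0 = zero, 1 = a, 2 = e, 3 = f):
  e e = e, f f = f, e a = a, a f = a, all other products 0.\<close>
definition B0_mult :: "nat \<Rightarrow> nat \<Rightarrow> nat" where
  "B0_mult x y = (if x = 2 \<and> y = 2 then 2
                  else if x = 3 \<and> y = 3 then 3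
                  else if x = 2 \<and> y = 1 then 1
                  else if x = 1 \<and> y = 3 then 1
                  else 0)"

definition B0 :: "nat sgrp" where
  "B0 = ({0, 1, 2, 3}, B0_mult)"

text \<open>B0^I: B0 with an external identity adjoined, encoded as 4.\<close>
definition B0I :: "nat sgrp" where
  "B0I = ({0, 1, 2, 3, 4}, \<lambda>x y. if x = 4 then y else if y = 4 then x else B0_mult x y)"

end

theory Submission
  imports Defs
begin

text \<open>
  \<open>B0\<close> and \<open>B0\<^sup>I\<close> are quotients of subsemigroups of the product of the submonoids
  \<open>{0, a, e, 1}\<close> and \<open>{0, a, f, 1}\<close> of \<open>B0\<^sup>I\<close>. These satisfy \<open>xyx = yxx\<close> and \<open>xyx = xxy\<close>
  respectively, while \<open>B0\<close> and \<open>B0\<^sup>I\<close> satisfy neither. Hence \<open>\<lbrakk>B0\<rbrakk>\<close> lies in the join of the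
  two pseudovarieties these identities define but in neither of them, and \<open>\<lbrakk>B0\<^sup>I\<rbrakk>\<close> is the join
  of the two pseudovarieties generated by the submonoids; this gives (ii) and (iii).

  For (i), choose finitely many identities of \<open>B0\<close> such that in every semigroup \<open>S\<close> satisfying
  them but not \<open>(x\<^sup>2yz\<^sup>2)\<^sup>2 = x\<^sup>2yz\<^sup>2\<close>, the elements \<open>e = x\<^sup>2\<close>, \<open>f = z\<^sup>2\<close>, \<open>w = eyf\<close> lie
  outside the ideal \<open>S ef S\<close>; then the Rees quotient of \<open>{e, f, w} \<union> S ef S\<close> by that ideal
  is \<open>B0\<close>. Hence if \<open>\<lbrakk>B0\<rbrakk>\<close> were the join of pseudovarieties not containing \<open>B0\<close>, all of them
  would satisfy \<open>(x\<^sup>2yz\<^sup>2)\<^sup>2 = x\<^sup>2yz\<^sup>2\<close>, and so would \<open>B0\<close>.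
\<close>

section \<open>Identities\<close>

datatype sg_term = Var nat | Mult sg_term sg_term

fun eval_term :: "('a \<Rightarrow> 'a \<Rightarrow> 'a) \<Rightarrow> (nat \<Rightarrow> 'a) \<Rightarrow> sg_term \<Rightarrow> 'a" where
  "eval_term m r (Var i) = r i"
| "eval_term m r (Mult s t) = m (eval_term m r s) (eval_term m r t)"

fun term_vars :: "sg_term \<Rightarrow> nat set" where
  "term_vars (Var i) = {i}"
| "term_vars (Mult s t) = term_vars s \<union> term_vars t"

definition satisfies :: "'a sgrp \<Rightarrow> sg_term \<times> sg_term \<Rightarrow> bool" where
  "satisfies S e \<longleftrightarrow>
     (\<forall>r. (\<forall>i. r i \<in> fst S) \<longrightarrow> eval_term (snd S) r (fst e) = eval_term (snd S) r (snd e))"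

definition models :: "(sg_term \<times> sg_term) set \<Rightarrow> nat sgrp set" where
  "models E = {S. finite_sg S \<and> (\<forall>e\<in>E. satisfies S e)}"

lemma eval_term_closed:
  assumes "\<forall>x\<in>fst S. \<forall>y\<in>fst S. snd S x y \<in> fst S" "\<forall>i. r i \<in> fst S"
  shows "eval_term (snd S) r t \<in> fst S"
  using assms by (induction t) auto

lemma eval_term_hom:
  assumes "sg_hom S T h" "\<forall>x\<in>fst S. \<forall>y\<in>fst S. snd S x y \<in> fst S" "\<forall>i. r i \<in> fst S"
  shows "h (eval_term (snd S) r t) = eval_term (snd T) (h \<circ> r) t"
  using assms
proof (induction t)
  case (Mult s t)
  then show ?case
    using eval_term_closed[OF Mult.prems(2,3)] by (simp add: sg_hom_def)
qed simp

lemma eval_term_prod: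
  "eval_term (snd (sg_prod S T)) r t = (eval_term (snd S) (fst \<circ> r) t, eval_term (snd T) (snd \<circ> r) t)"
  by (induction t) (auto simp: sg_prod_def)

lemma eval_term_cong: "\<forall>i\<in>term_vars t. r i = r' i \<Longrightarrow> eval_term m r t = eval_term m r' t"
  by (induction t) auto

lemma satisfies_prod:
  assumes "satisfies S e" "satisfies T e"
  shows "satisfies (sg_prod S T) e"
  unfolding satisfies_def
proof (intro allI impI)
  fix r :: "nat \<Rightarrow> _" assume "\<forall>i. r i \<in> fst (sg_prod S T)"
  then have "\<forall>i. (fst \<circ> r) i \<in> fst S" "\<forall>i. (snd \<circ> r) i \<in> fst T"
    by (auto simp: sg_prod_def mem_Times_iff)
  then show "eval_term (snd (sg_prod S T)) r (fst e) = eval_term (snd (sg_prod S T)) r (snd e)"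
    using assms unfolding satisfies_def eval_term_prod by simp
qed

lemma satisfies_inj_hom:
  assumes "semigroup_on U" "sg_hom U P h" "inj_on h (fst U)" "satisfies P e"
  shows "satisfies U e"
  unfolding satisfies_def
proof (intro allI impI)
  fix r :: "nat \<Rightarrow> _" assume r: "\<forall>i. r i \<in> fst U"
  have closed: "\<forall>x\<in>fst U. \<forall>y\<in>fst U. snd U x y \<in> fst U"
    using assms(1) by (simp add: semigroup_on_def)
  have "\<forall>i. (h \<circ> r) i \<in> fst P" using r assms(2) by (auto simp: sg_hom_def)
  then have "h (eval_term (snd U) r (fst e)) = h (eval_term (snd U) r (snd e))"
    using eval_term_hom[OF assms(2) closed r] assms(4) unfolding satisfies_def by simp
  then show "eval_term (snd U) r (fst e) = eval_term (snd U) r (snd e)"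
    using assms(3) eval_term_closed[OF closed r] by (meson inj_onD)
qed

lemma satisfies_image:
  assumes "semigroup_on S" "sg_hom S T h" "h ` fst S = fst T" "satisfies S e"
  shows "satisfies T e"
  unfolding satisfies_def
proof (intro allI impI)
  fix r :: "nat \<Rightarrow> _" assume r: "\<forall>i. r i \<in> fst T"
  define r' where "r' i = (SOME s. s \<in> fst S \<and> h s = r i)" for i
  have r': "r' i \<in> fst S \<and> h (r' i) = r i" for i
    unfolding r'_def by (rule someI_ex) (metis r assms(3) imageE)
  then have hr: "h \<circ> r' = r" and r'S: "\<forall>i. r' i \<in> fst S" by auto
  have closed: "\<forall>x\<in>fst S. \<forall>y\<in>fst S. snd S x y \<in> fst S"
    using assms(1) by (simp add: semigroup_on_def)
  show "eval_term (snd T) r (fst e) = eval_term (snd T) r (snd e)"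
    using eval_term_hom[OF assms(2) closed r'S, symmetric] assms(4) r'S
    unfolding satisfies_def hr by metis
qed

lemma trivial_sg_satisfies: "satisfies ({0::nat}, \<lambda>x y. 0) e"
proof -
  have "eval_term (\<lambda>x y. 0) r t = (0::nat)" if "\<forall>i. r i \<in> {0::nat}" for r t
    using that by (induction t) auto
  then show ?thesis unfolding satisfies_def by simp
qed

lemma pseudovariety_models: "pseudovariety (models E)"
  unfolding pseudovariety_def
proof (intro conjI ballI allI impI)
  have "({0}, \<lambda>x y. 0) \<in> models E"
    by (simp add: models_def finite_sg_def semigroup_on_def trivial_sg_satisfies)
  then show "models E \<noteq> {}" by blast
next
  fix S assume "S \<in> models E" then show "finite_sg S" by (simp add: models_def)
next
  fix S T U :: "nat sgrp" assume S: "S \<in> models E" and T: "T \<in> models E"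
    and U: "finite_sg U \<and> (\<exists>h. sg_hom U (sg_prod S T) h \<and> inj_on h (fst U))"
  then obtain h where h: "sg_hom U (sg_prod S T) h" "inj_on h (fst U)" by blast
  have "satisfies U e" if "e \<in> E" for e
    using satisfies_inj_hom[OF _ h satisfies_prod] S T U that by (auto simp: models_def finite_sg_def)
  then show "U \<in> models E" using U by (simp add: models_def)
next
  fix S T :: "nat sgrp" assume S: "S \<in> models E"
    and T: "finite_sg T \<and> (\<exists>h. sg_hom S T h \<and> h ` fst S = fst T)"
  then obtain h where h: "sg_hom S T h" "h ` fst S = fst T" by blast
  have "satisfies T e" if "e \<in> E" for e
    using satisfies_image[OF _ h] S that by (auto simp: models_def finite_sg_def)
  then show "T \<in> models E" using T by (simp add: models_def)
qed

fun word :: "nat list \<Rightarrow> sg_term" where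
  "word [] = Var 0"
| "word [i] = Var i"
| "word (i # j # k) = Mult (Var i) (word (j # k))"

definition idempotent_word :: "nat list \<Rightarrow> sg_term \<times> sg_term" where
  "idempotent_word w = (Mult (word w) (word w), word w)"

definition assign4 :: "'a \<Rightarrow> 'a \<Rightarrow> 'a \<Rightarrow> 'a \<Rightarrow> nat \<Rightarrow> 'a" where
  "assign4 a b c d i = (if i = 0 then a else if i = 1 then b else if i = 2 then c else d)"

lemma satisfies_if_assign4:
  assumes "term_vars l \<subseteq> {0..3}" "term_vars r \<subseteq> {0..3}"
    and "\<forall>a\<in>fst S. \<forall>b\<in>fst S. \<forall>c\<in>fst S. \<forall>d\<in>fst S.
           eval_term (snd S) (assign4 a b c d) l = eval_term (snd S) (assign4 a b c d) r"
  shows "satisfies S (l, r)"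
  unfolding satisfies_def
proof (intro allI impI)
  fix \<rho> :: "nat \<Rightarrow> _" assume \<rho>: "\<forall>i. \<rho> i \<in> fst S"
  let ?r = "assign4 (\<rho> 0) (\<rho> 1) (\<rho> 2) (\<rho> 3)"
  have agree: "?r i = \<rho> i" if "i \<le> 3" for i
  proof -
    have "i = 0 \<or> i = 1 \<or> i = 2 \<or> i = 3" using that by arith
    then show ?thesis unfolding assign4_def by auto
  qed
  have "eval_term (snd S) \<rho> l = eval_term (snd S) ?r l"
    by (rule eval_term_cong) (use assms(1) agree in auto)
  also have "\<dots> = eval_term (snd S) ?r r" using assms(3) \<rho> by blast
  also have "\<dots> = eval_term (snd S) \<rho> r"
    by (rule eval_term_cong[symmetric]) (use assms(2) agree in auto)
  finally show "eval_term (snd S) \<rho> (fst (l, r)) = eval_term (snd S) \<rho> (snd (l, r))" by simp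
qed

lemma satisfies_assign4:
  assumes "satisfies (C, m) (l, r)" "a \<in> C" "b \<in> C" "c \<in> C" "d \<in> C"
  shows "eval_term m (assign4 a b c d) l = eval_term m (assign4 a b c d) r"
  using assms unfolding satisfies_def by (auto simp: assign4_def)

section \<open>Pseudovarieties and division\<close>

lemma pseudovariety_embedded:
  "pseudovariety W \<Longrightarrow> S \<in> W \<Longrightarrow> T \<in> W \<Longrightarrow> finite_sg U \<Longrightarrow>
    sg_hom U (sg_prod S T) h \<Longrightarrow> inj_on h (fst U) \<Longrightarrow> U \<in> W"
  unfolding pseudovariety_def by blast

lemma pseudovariety_image:
  "pseudovariety W \<Longrightarrow> S \<in> W \<Longrightarrow> finite_sg T \<Longrightarrow>
    sg_hom S T h \<Longrightarrow> h ` fst S = fst T \<Longrightarrow> T \<in> W"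
  unfolding pseudovariety_def by blast

lemma pseudovariety_finite_sg: "pseudovariety W \<Longrightarrow> S \<in> W \<Longrightarrow> finite_sg S"
  unfolding pseudovariety_def by blast

lemma pseudovariety_Inter:
  assumes "F \<noteq> {}" "\<forall>W\<in>F. pseudovariety W"
  shows "pseudovariety (\<Inter>F)"
proof -
  let ?triv = "({0::nat}, \<lambda>x y. 0) :: nat sgrp"
  have triv: "finite_sg ?triv" by (simp add: finite_sg_def semigroup_on_def)
  have "?triv \<in> W" if W: "pseudovariety W" for W
  proof -
    obtain S where S: "S \<in> W" using W unfolding pseudovariety_def by blast
    then have "fst S \<noteq> {}"
      using pseudovariety_finite_sg[OF W] by (simp add: finite_sg_def semigroup_on_def)
    then show ?thesis
      using pseudovariety_image[OF W S triv, of "\<lambda>_. 0"] by (auto simp: sg_hom_def)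
  qed
  then have nonempty: "\<Inter>F \<noteq> {}" using assms(2) by blast
  show ?thesis
    unfolding pseudovariety_def[of "\<Inter>F"]
  proof (intro conjI nonempty ballI allI impI)
    fix S assume "S \<in> \<Inter>F"
    then show "finite_sg S" using assms pseudovariety_finite_sg by blast
  next
    fix S T U :: "nat sgrp"
    assume ST: "S \<in> \<Inter>F" "T \<in> \<Inter>F"
      and "finite_sg U \<and> (\<exists>h. sg_hom U (sg_prod S T) h \<and> inj_on h (fst U))"
    then obtain h where h: "finite_sg U" "sg_hom U (sg_prod S T) h" "inj_on h (fst U)" by blast
    show "U \<in> \<Inter>F"
    proof
      fix W assume "W \<in> F"
      then show "U \<in> W" using pseudovariety_embedded[OF _ _ _ h] ST assms(2) by blast
    qed
  next
    fix S T :: "nat sgrp"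
    assume S: "S \<in> \<Inter>F" and "finite_sg T \<and> (\<exists>h. sg_hom S T h \<and> h ` fst S = fst T)"
    then obtain h where h: "finite_sg T" "sg_hom S T h" "h ` fst S = fst T" by blast
    show "T \<in> \<Inter>F"
    proof
      fix W assume "W \<in> F"
      then show "T \<in> W" using pseudovariety_image[OF _ _ h] S assms(2) by blast
    qed
  qed
qed

lemma pseudovariety_pv_gen:
  assumes "finite_sg S"
  shows "pseudovariety (pv_gen S)"
proof -
  have "pseudovariety {T :: nat sgrp. finite_sg T}"
    using assms unfolding pseudovariety_def by blast
  then show ?thesis
    unfolding pv_gen_def using assms by (intro pseudovariety_Inter) auto
qed

lemma pv_gen_least: "pseudovariety W \<Longrightarrow> S \<in> W \<Longrightarrow> pv_gen S \<subseteq> W"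
  unfolding pv_gen_def by blast

lemma pv_gen_generator: "S \<in> pv_gen S"
  unfolding pv_gen_def by blast

lemma pv_join_upper: "W \<in> X \<Longrightarrow> W \<subseteq> pv_join X"
  unfolding pv_join_def by blast

lemma pv_join_least: "pseudovariety W \<Longrightarrow> \<Union>X \<subseteq> W \<Longrightarrow> pv_join X \<subseteq> W"
  unfolding pv_join_def by blast

lemma finite_sg_prod: "finite_sg S \<Longrightarrow> finite_sg T \<Longrightarrow> finite_sg (sg_prod S T)"
  unfolding finite_sg_def semigroup_on_def sg_prod_def by auto

lemma semigroup_on_if_inj_hom:
  assumes "U \<noteq> {}" and closed: "\<forall>x\<in>U. \<forall>y\<in>U. m x y \<in> U"
    and hom: "sg_hom (U, m) P h" and inj: "inj_on h U" and "semigroup_on P"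
  shows "semigroup_on (U, m)"
  unfolding semigroup_on_def fst_conv snd_conv
proof (intro conjI assms(1) closed ballI)
  fix x y z assume xyz: "x \<in> U" "y \<in> U" "z \<in> U"
  have hm: "h (m a b) = snd P (h a) (h b)" if "a \<in> U" "b \<in> U" for a b
    using hom that unfolding sg_hom_def by auto
  have "h a \<in> fst P" if "a \<in> U" for a using hom that unfolding sg_hom_def by auto
  then have "h (m (m x y) z) = h (m x (m y z))"
    using xyz closed \<open>semigroup_on P\<close> by (simp add: hm semigroup_on_def)
  then show "m (m x y) z = m x (m y z)" using inj xyz closed by (meson inj_onD)
qed

definition divides :: "'b sgrp \<Rightarrow> 'a sgrp \<Rightarrow> bool" where
  "divides B S \<longleftrightarrow> (\<exists>U h. U \<subseteq> fst S \<and> U \<noteq> {} \<and> (\<forall>x\<in>U. \<forall>y\<in>U. snd S x y \<in> U) \<and>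
     sg_hom (U, snd S) B h \<and> h ` U = fst B)"

lemma subsemigroup_divides:
  "U \<subseteq> fst S \<Longrightarrow> U \<noteq> {} \<Longrightarrow> \<forall>x\<in>U. \<forall>y\<in>U. snd S x y \<in> U \<Longrightarrow> divides (U, snd S) S"
  unfolding divides_def sg_hom_def by (intro exI[of _ U] exI[of _ id]) auto

lemma pseudovariety_divisor:
  assumes W: "pseudovariety W" "S \<in> W" and B: "finite_sg B" "divides B S"
  shows "B \<in> W"
proof -
  obtain U h where U: "U \<subseteq> fst S" "U \<noteq> {}" "\<forall>x\<in>U. \<forall>y\<in>U. snd S x y \<in> U"
    and h: "sg_hom (U, snd S) B h" "h ` U = fst B"
    using B(2) unfolding divides_def by blast
  have S: "finite_sg S" using pseudovariety_finite_sg[OF W] .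
  have diag: "sg_hom (U, snd S) (sg_prod S S) (\<lambda>u. (u, u))"
    using U(1) unfolding sg_hom_def sg_prod_def by auto
  have "semigroup_on (U, snd S)"
    by (rule semigroup_on_if_inj_hom[OF U(2,3) diag])
      (use finite_sg_prod[OF S S] in \<open>auto simp: inj_on_def finite_sg_def\<close>)
  then have "finite_sg (U, snd S)"
    using S U(1) by (auto simp: finite_sg_def intro: finite_subset)
  then have "(U, snd S) \<in> W"
    using pseudovariety_embedded[OF W(1,2,2) _ diag] by (simp add: inj_on_def)
  then show ?thesis using pseudovariety_image[OF W(1) _ B(1) h(1)] h(2) by simp
qed

lemma nat_copy_of_subsemigroup:
  assumes P: "finite_sg P" and U: "U \<subseteq> fst P" "U \<noteq> {}" "\<forall>x\<in>U. \<forall>y\<in>U. snd P x y \<in> U"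
  obtains U' :: "nat set" and m' dec
  where "finite_sg (U', m')" "sg_hom (U', m') P dec" "inj_on dec U'" "dec ` U' = U"
proof -
  have "finite U" using P U(1) by (auto simp: finite_sg_def intro: finite_subset)
  then obtain enc :: "_ \<Rightarrow> nat" where enc: "inj_on enc U"
    using finite_imp_inj_to_nat_seg by blast
  define dec where "dec = the_inv_into U enc"
  define U' where "U' = enc ` U"
  define m' where "m' x y = enc (snd P (dec x) (dec y))" for x y
  have dec: "dec u' \<in> U" "enc (dec u') = u'" if "u' \<in> U'" for u'
    using that enc unfolding U'_def dec_def by (auto simp: the_inv_into_f_f)
  have dec_enc: "dec (enc u) = u" if "u \<in> U" for u
    using that enc unfolding dec_def by (simp add: the_inv_into_f_f)
  have closed: "\<forall>x\<in>U'. \<forall>y\<in>U'. m' x y \<in> U'"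
    using U(3) dec unfolding U'_def m'_def by blast
  have hom: "sg_hom (U', m') P dec"
    using dec U(1,3) dec_enc unfolding sg_hom_def m'_def by auto
  have inj: "inj_on dec U'"
    using dec by (metis inj_onI)
  have "finite_sg (U', m')"
    using semigroup_on_if_inj_hom[OF _ closed hom inj] P U(2) \<open>finite U\<close>
    by (simp add: finite_sg_def U'_def)
  moreover have "dec ` U' = U"
    using dec_enc unfolding U'_def image_image by simp
  ultimately show ?thesis using that[OF _ hom inj] by blast
qed

lemma pseudovariety_divisor_of_prod:
  assumes W: "pseudovariety W" "S \<in> W" "T \<in> W" and B: "finite_sg B" "divides B (sg_prod S T)"
  shows "B \<in> W"
proof -
  obtain U h where U: "U \<subseteq> fst (sg_prod S T)" "U \<noteq> {}" "\<forall>x\<in>U. \<forall>y\<in>U. snd (sg_prod S T) x y \<in> U"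
    and h: "sg_hom (U, snd (sg_prod S T)) B h" "h ` U = fst B"
    using B(2) unfolding divides_def by blast
  have P: "finite_sg (sg_prod S T)"
    using finite_sg_prod pseudovariety_finite_sg[OF W(1)] W(2,3) by blast
  \<comment> \<open>\<open>W\<close> only contains semigroups on \<open>nat\<close>, so \<open>U\<close> is first copied into \<open>nat\<close>.\<close>
  obtain U' :: "nat set" and m' dec where U': "finite_sg (U', m')" "sg_hom (U', m') (sg_prod S T) dec"
    "inj_on dec U'" "dec ` U' = U"
    by (rule nat_copy_of_subsemigroup[OF P U])
  then have "(U', m') \<in> W" using pseudovariety_embedded[OF W U'(1,2)] U'(3) by simp
  moreover have "sg_hom (U', m') B (h \<circ> dec)"
    using h(1) U'(2,4) unfolding sg_hom_def by auto
  moreover have "(h \<circ> dec) ` U' = fst B"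
    using h(2) U'(4) by (metis image_comp)
  ultimately show ?thesis using pseudovariety_image[OF W(1) _ B(1)] by simp
qed

lemma divides_pv_gen: "finite_sg B \<Longrightarrow> divides B S \<Longrightarrow> B \<in> pv_gen S"
  unfolding pv_gen_def using pseudovariety_divisor by blast

section \<open>\<open>B0\<close> as a Rees quotient\<close>

lemma B0_mult_simps [simp]:
  "B0_mult 0 y = 0" "B0_mult x 0 = 0" "B0_mult 1 1 = 0" "B0_mult 1 2 = 0" "B0_mult 1 3 = 1"
  "B0_mult 2 1 = 1" "B0_mult 2 2 = 2" "B0_mult 2 3 = 0" "B0_mult 3 1 = 0" "B0_mult 3 2 = 0"
  "B0_mult 3 3 = 3" "B0_mult (Suc 0) (Suc 0) = 0" "B0_mult (Suc 0) 2 = 0"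
  "B0_mult (Suc 0) 3 = Suc 0" "B0_mult 2 (Suc 0) = Suc 0" "B0_mult 3 (Suc 0) = 0"
  by (simp_all add: B0_mult_def)

lemma finite_sg_B0: "finite_sg B0"
  unfolding finite_sg_def semigroup_on_def B0_def by simp

lemma finite_sg_B0I: "finite_sg B0I"
  unfolding finite_sg_def semigroup_on_def B0I_def by simp

locale semigroup_carrier =
  fixes C :: "'a set" and mult :: "'a \<Rightarrow> 'a \<Rightarrow> 'a" (infixr "\<cdot>" 70)
  assumes closed [simp]: "x \<in> C \<Longrightarrow> y \<in> C \<Longrightarrow> x \<cdot> y \<in> C"
    and assoc [simp]: "x \<in> C \<Longrightarrow> y \<in> C \<Longrightarrow> z \<in> C \<Longrightarrow> (x \<cdot> y) \<cdot> z = x \<cdot> y \<cdot> z"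
begin

definition sandwich :: "'a \<Rightarrow> 'a set" where
  "sandwich g = {a \<cdot> g \<cdot> b | a b. a \<in> C \<and> b \<in> C}"

lemma sandwichI: "a \<in> C \<Longrightarrow> b \<in> C \<Longrightarrow> u = a \<cdot> g \<cdot> b \<Longrightarrow> u \<in> sandwich g"
  unfolding sandwich_def by blast

lemma sandwichE:
  assumes "u \<in> sandwich g"
  obtains a b where "a \<in> C" "b \<in> C" "u = a \<cdot> g \<cdot> b"
  using assms unfolding sandwich_def by blast

lemma sandwich_subset: "g \<in> C \<Longrightarrow> sandwich g \<subseteq> C"
  by (auto elim: sandwichE)

lemma sandwich_ideal:
  assumes "g \<in> C" "u \<in> sandwich g" "v \<in> C"
  shows "u \<cdot> v \<in> sandwich g" "v \<cdot> u \<in> sandwich g"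
proof -
  obtain a b where ab: "a \<in> C" "b \<in> C" "u = a \<cdot> g \<cdot> b" using assms(2) by (rule sandwichE)
  show "u \<cdot> v \<in> sandwich g" by (rule sandwichI[of a "b \<cdot> v"]) (use ab assms in simp_all)
  show "v \<cdot> u \<in> sandwich g" by (rule sandwichI[of "v \<cdot> a" b]) (use ab assms in simp_all)
qed

text \<open>The Rees quotient of \<open>{e, f, w} \<union> I\<close> by the ideal \<open>I\<close> is a copy of \<open>B0\<close>.\<close>
lemma B0_divides_via_ideal:
  assumes I: "I \<subseteq> C" "\<And>u v. u \<in> I \<Longrightarrow> v \<in> C \<Longrightarrow> u \<cdot> v \<in> I \<and> v \<cdot> u \<in> I"
    and C: "e \<in> C" "f \<in> C" "w \<in> C" and notin: "e \<notin> I" "f \<notin> I" "w \<notin> I"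
    and idem: "e \<cdot> e = e" "f \<cdot> f = f" and unit: "e \<cdot> w = w" "w \<cdot> f = w"
    and zero: "e \<cdot> f \<in> I" "f \<cdot> e \<in> I" "f \<cdot> w \<in> I" "w \<cdot> e \<in> I" "w \<cdot> w \<in> I"
  shows "divides B0 (C, (\<cdot>))"
proof -
  have distinct: "e \<noteq> f" "e \<noteq> w" "f \<noteq> w"
    using notin idem zero by auto
  define U where "U = {e, f, w} \<union> I"
  define \<phi> where "\<phi> u = (if u = e then 2 else if u = w then 1 else if u = f then 3 else 0::nat)" for u
  have \<phi>: "\<phi> e = 2" "\<phi> f = 3" "\<phi> w = 1" "\<And>u. u \<in> I \<Longrightarrow> \<phi> u = 0"
    using distinct notin unfolding \<phi>_def by auto
  have mult_U: "u \<cdot> v \<in> U \<and> \<phi> (u \<cdot> v) = B0_mult (\<phi> u) (\<phi> v)" if "u \<in> U" "v \<in> U" for u v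
  proof (cases "u \<in> I \<or> v \<in> I")
    case True
    then have "u \<cdot> v \<in> I" using I that C unfolding U_def by blast
    then show ?thesis using True \<phi> U_def by auto
  next
    case False
    then have "u \<in> {e, f, w}" "v \<in> {e, f, w}" using that U_def by auto
    then show ?thesis using zero idem unit \<phi> U_def by auto
  qed
  have "\<phi> (e \<cdot> f) = 0" using \<phi> zero by blast
  then have "\<phi> ` U = fst B0"
    using \<phi> zero unfolding U_def B0_def by (auto simp: image_iff)
  moreover have "U \<subseteq> C" using I C U_def by blast
  ultimately show ?thesis
    unfolding divides_def sg_hom_def B0_def using mult_U by (intro exI[of _ U] exI[of _ \<phi>]) auto
qed

lemma idempotent_in_sandwich_absorbs:
  assumes "u \<in> C" "v \<in> C" "g \<in> C" "u \<cdot> u = u" "u \<in> sandwich g"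
    and absorb: "\<And>a b. a \<in> C \<Longrightarrow> b \<in> C \<Longrightarrow> u \<cdot> a \<cdot> g \<cdot> b \<cdot> u = u \<cdot> a \<cdot> g \<cdot> b \<cdot> u \<cdot> v"
  shows "u \<cdot> v = u"
proof -
  obtain a b where ab: "a \<in> C" "b \<in> C" "u = a \<cdot> g \<cdot> b" using assms(5) by (rule sandwichE)
  have "u \<cdot> (a \<cdot> g \<cdot> b) \<cdot> u = u"
    unfolding ab(3)[symmetric] using assms(4) by simp
  then have uagbu: "u \<cdot> a \<cdot> g \<cdot> b \<cdot> u = u" using ab(1,2) assms(1,3) by simp
  have "u \<cdot> v = (u \<cdot> a \<cdot> g \<cdot> b \<cdot> u) \<cdot> v" by (simp only: uagbu)
  also have "\<dots> = u \<cdot> a \<cdot> g \<cdot> b \<cdot> u \<cdot> v" using ab(1,2) assms(1-3) by simp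
  also have "\<dots> = u \<cdot> a \<cdot> g \<cdot> b \<cdot> u" by (rule absorb[OF ab(1,2), symmetric])
  finally show ?thesis using uagbu by simp
qed

lemma B0_divides_if_not_idempotent:
  assumes C: "e \<in> C" "f \<in> C" "y \<in> C"
    and idem: "e \<cdot> e = e" "f \<cdot> f = f" and comm: "f \<cdot> e = e \<cdot> f"
    and efyf: "\<And>y. y \<in> C \<Longrightarrow> (e \<cdot> f \<cdot> y \<cdot> f) \<cdot> (e \<cdot> f \<cdot> y \<cdot> f) = e \<cdot> f \<cdot> y \<cdot> f"
    and eyef: "\<And>y. y \<in> C \<Longrightarrow> (e \<cdot> y \<cdot> e \<cdot> f) \<cdot> (e \<cdot> y \<cdot> e \<cdot> f) = e \<cdot> y \<cdot> e \<cdot> f"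
    and eaefbf: "\<And>a b. a \<in> C \<Longrightarrow> b \<in> C \<Longrightarrow>
           (e \<cdot> a \<cdot> e \<cdot> f \<cdot> b \<cdot> f) \<cdot> (e \<cdot> a \<cdot> e \<cdot> f \<cdot> b \<cdot> f) = e \<cdot> a \<cdot> e \<cdot> f \<cdot> b \<cdot> f"
    and e_absorbs: "\<And>a b. a \<in> C \<Longrightarrow> b \<in> C \<Longrightarrow>
           e \<cdot> a \<cdot> e \<cdot> f \<cdot> b \<cdot> e = e \<cdot> a \<cdot> e \<cdot> f \<cdot> b \<cdot> e \<cdot> f"
    and f_absorbs: "\<And>a b. a \<in> C \<Longrightarrow> b \<in> C \<Longrightarrow>
           f \<cdot> a \<cdot> e \<cdot> f \<cdot> b \<cdot> f = f \<cdot> a \<cdot> e \<cdot> f \<cdot> b \<cdot> f \<cdot> e"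
    and not_idem: "(e \<cdot> y \<cdot> f) \<cdot> (e \<cdot> y \<cdot> f) \<noteq> e \<cdot> y \<cdot> f"
  shows "divides B0 (C, (\<cdot>))"
proof -
  define w where "w = e \<cdot> y \<cdot> f"
  define I where "I = sandwich (e \<cdot> f)"
  have ee: "e \<cdot> e \<cdot> t = e \<cdot> t" and ff: "f \<cdot> f \<cdot> t = f \<cdot> t" and fe: "f \<cdot> e \<cdot> t = e \<cdot> f \<cdot> t"
    if "t \<in> C" for t
    using assoc[OF C(1,1) that] assoc[OF C(2,2) that] assoc[OF C(2,1) that] assoc[OF C(1,2) that]
      idem comm by simp_all
  note simps = C idem comm ee ff fe
  have ef: "e \<cdot> f \<in> C" using C by simp
  have w: "w \<in> C" "e \<cdot> w = w" "w \<cdot> f = w" "w \<cdot> w \<noteq> w"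
    using not_idem unfolding w_def by (simp_all add: simps)
  have I_subset: "I \<subseteq> C" unfolding I_def using ef by (rule sandwich_subset)
  have I_ideal: "u \<cdot> v \<in> I \<and> v \<cdot> u \<in> I" if "u \<in> I" "v \<in> C" for u v
    using sandwich_ideal[OF ef] that unfolding I_def by blast
  have "e \<cdot> f \<in> I" "f \<cdot> e \<in> I" unfolding I_def by (rule sandwichI[of e e]; simp add: simps)+
  moreover have "f \<cdot> w \<in> I" unfolding I_def w_def by (rule sandwichI[of e "y \<cdot> f"]; simp add: simps)
  moreover have "w \<cdot> e \<in> I" unfolding I_def w_def by (rule sandwichI[of "e \<cdot> y" e]; simp add: simps)
  moreover have "w \<cdot> w \<in> I"
    unfolding I_def w_def by (rule sandwichI[of "e \<cdot> y" "y \<cdot> f"]; simp add: simps)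
  moreover have "e \<notin> I"
  proof
    assume "e \<in> I"
    have "e \<cdot> f = e"
    proof (rule idempotent_in_sandwich_absorbs[OF C(1,2) ef idem(1)])
      show "e \<in> sandwich (e \<cdot> f)" using \<open>e \<in> I\<close> unfolding I_def .
      show "e \<cdot> a \<cdot> (e \<cdot> f) \<cdot> b \<cdot> e = e \<cdot> a \<cdot> (e \<cdot> f) \<cdot> b \<cdot> e \<cdot> f"
        if "a \<in> C" "b \<in> C" for a b
        using e_absorbs[OF that] that C by simp
    qed
    then have "w = (e \<cdot> f) \<cdot> y \<cdot> f" unfolding w_def by simp
    then show False using efyf[OF C(3)] w(4) C by simp
  qed
  moreover have "f \<notin> I"
  proof
    assume "f \<in> I"
    have "f \<cdot> e = f"
    proof (rule idempotent_in_sandwich_absorbs[OF C(2,1) ef idem(2)])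
      show "f \<in> sandwich (e \<cdot> f)" using \<open>f \<in> I\<close> unfolding I_def .
      show "f \<cdot> a \<cdot> (e \<cdot> f) \<cdot> b \<cdot> f = f \<cdot> a \<cdot> (e \<cdot> f) \<cdot> b \<cdot> f \<cdot> e"
        if "a \<in> C" "b \<in> C" for a b
        using f_absorbs[OF that] that C by simp
    qed
    then have "w = e \<cdot> y \<cdot> (e \<cdot> f)" unfolding w_def using comm by simp
    then show False using eyef[OF C(3)] w(4) C by simp
  qed
  moreover have "w \<notin> I"
  proof
    assume "w \<in> I"
    then obtain a b where ab: "a \<in> C" "b \<in> C" "w = a \<cdot> (e \<cdot> f) \<cdot> b"
      unfolding I_def by (rule sandwichE)
    have "w = e \<cdot> w \<cdot> f" using w by simp
    also have "\<dots> = e \<cdot> a \<cdot> e \<cdot> f \<cdot> b \<cdot> f" using ab C by simp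
    finally show False using eaefbf[OF ab(1,2)] w(4) by simp
  qed
  ultimately show ?thesis
    using B0_divides_via_ideal[OF I_subset I_ideal C(1,2) w(1)] idem w(2,3) by blast
qed

end

section \<open>Strict join irreducibility of \<open>\<lbrakk>B0\<rbrakk>\<close>\<close>

lemma semigroup_carrier_if_semigroup_on: "semigroup_on (C, m) \<Longrightarrow> semigroup_carrier C m"
  unfolding semigroup_on_def by unfold_locales auto

text \<open>In the identities below the variables \<open>x, y, z, t\<close> are numbered \<open>0, 1, 2, 3\<close>; in a
  semigroup satisfying them, \<open>x\<^sup>2\<close> and \<open>z\<^sup>2\<close> play the roles of the idempotents \<open>e\<close> and \<open>f\<close>.\<close>
definition B0_identities :: "(sg_term \<times> sg_term) set" where
  "B0_identities =
     {(word [0,0,0,0], word [0,0]), (word [0,0,2,2], word [2,2,0,0]),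
      idempotent_word [0,0,2,2,1,2,2], idempotent_word [0,0,1,0,0,2,2],
      idempotent_word [0,0,1,0,0,2,2,3,2,2],
      (word [0,0,1,0,0,2,2,3,0,0], word [0,0,1,0,0,2,2,3,0,0,2,2]),
      (word [2,2,1,0,0,2,2,3,2,2], word [2,2,1,0,0,2,2,3,2,2,0,0])}"

definition x2yz2_idempotent :: "sg_term \<times> sg_term" where
  "x2yz2_idempotent = idempotent_word [0,0,1,2,2]"

lemma B0_models_B0_identities: "B0 \<in> models B0_identities"
proof -
  have "satisfies B0 e" if "e \<in> B0_identities" for e
    using that unfolding B0_identities_def idempotent_word_def
    by (auto intro!: satisfies_if_assign4 simp: B0_def assign4_def)
  then show ?thesis using finite_sg_B0 by (simp add: models_def)
qed

lemma B0_fails_x2yz2_idempotent: "\<not> satisfies B0 x2yz2_idempotent"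
proof
  assume "satisfies B0 x2yz2_idempotent"
  then have "satisfies ({0,1,2,3}, B0_mult) (Mult (word [0,0,1,2,2]) (word [0,0,1,2,2]), word [0,0,1,2,2])"
    by (simp add: x2yz2_idempotent_def idempotent_word_def B0_def)
  from satisfies_assign4[OF this, of 2 1 3 0] show False by (simp add: assign4_def)
qed

context semigroup_carrier
begin

lemma B0_divides_carrier_if_fails_x2yz2_idempotent:
  assumes sat: "\<And>e. e \<in> B0_identities \<Longrightarrow> satisfies (C, (\<cdot>)) e"
    and fails: "\<not> satisfies (C, (\<cdot>)) x2yz2_idempotent"
  shows "divides B0 (C, (\<cdot>))"
proof -
  have s1: "satisfies (C, (\<cdot>)) (word [0,0,0,0], word [0,0])"
    and s2: "satisfies (C, (\<cdot>)) (word [0,0,2,2], word [2,2,0,0])"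
    and s3: "satisfies (C, (\<cdot>)) (idempotent_word [0,0,2,2,1,2,2])"
    and s4: "satisfies (C, (\<cdot>)) (idempotent_word [0,0,1,0,0,2,2])"
    and s5: "satisfies (C, (\<cdot>)) (idempotent_word [0,0,1,0,0,2,2,3,2,2])"
    and s6: "satisfies (C, (\<cdot>)) (word [0,0,1,0,0,2,2,3,0,0], word [0,0,1,0,0,2,2,3,0,0,2,2])"
    and s7: "satisfies (C, (\<cdot>)) (word [2,2,1,0,0,2,2,3,2,2], word [2,2,1,0,0,2,2,3,2,2,0,0])"
    by (rule sat, simp add: B0_identities_def)+
  obtain \<rho> where \<rho>: "\<forall>i. \<rho> i \<in> C"
    and "eval_term (\<cdot>) \<rho> (fst x2yz2_idempotent) \<noteq> eval_term (\<cdot>) \<rho> (snd x2yz2_idempotent)"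
    using fails unfolding satisfies_def by auto
  then obtain x y z where C: "x \<in> C" "y \<in> C" "z \<in> C"
    and not_idem: "((x \<cdot> x) \<cdot> y \<cdot> (z \<cdot> z)) \<cdot> ((x \<cdot> x) \<cdot> y \<cdot> (z \<cdot> z)) \<noteq> (x \<cdot> x) \<cdot> y \<cdot> (z \<cdot> z)"
    by (simp add: x2yz2_idempotent_def idempotent_word_def) blast
  show ?thesis
  proof (rule B0_divides_if_not_idempotent[OF _ _ C(2) _ _ _ _ _ _ _ _ not_idem])
    show "x \<cdot> x \<in> C" "z \<cdot> z \<in> C" using C by simp_all
    show "(x \<cdot> x) \<cdot> (x \<cdot> x) = x \<cdot> x"
      using satisfies_assign4[OF s1 C(1,1,1,1)] C by (simp add: assign4_def)
    show "(z \<cdot> z) \<cdot> (z \<cdot> z) = z \<cdot> z"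
      using satisfies_assign4[OF s1 C(3,3,3,3)] C by (simp add: assign4_def)
    show "(z \<cdot> z) \<cdot> (x \<cdot> x) = (x \<cdot> x) \<cdot> (z \<cdot> z)"
      using satisfies_assign4[OF s2 C(1,1,3,1)] C by (simp add: assign4_def)
    show "((x \<cdot> x) \<cdot> (z \<cdot> z) \<cdot> u \<cdot> (z \<cdot> z)) \<cdot> ((x \<cdot> x) \<cdot> (z \<cdot> z) \<cdot> u \<cdot> (z \<cdot> z))
        = (x \<cdot> x) \<cdot> (z \<cdot> z) \<cdot> u \<cdot> (z \<cdot> z)" if "u \<in> C" for u
      using satisfies_assign4[OF s3[unfolded idempotent_word_def] C(1) that C(3,1)] that C
      by (simp add: assign4_def)
    show "((x \<cdot> x) \<cdot> u \<cdot> (x \<cdot> x) \<cdot> (z \<cdot> z)) \<cdot> ((x \<cdot> x) \<cdot> u \<cdot> (x \<cdot> x) \<cdot> (z \<cdot> z))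
        = (x \<cdot> x) \<cdot> u \<cdot> (x \<cdot> x) \<cdot> (z \<cdot> z)" if "u \<in> C" for u
      using satisfies_assign4[OF s4[unfolded idempotent_word_def] C(1) that C(3,1)] that C
      by (simp add: assign4_def)
    show "((x \<cdot> x) \<cdot> a \<cdot> (x \<cdot> x) \<cdot> (z \<cdot> z) \<cdot> b \<cdot> (z \<cdot> z))
          \<cdot> ((x \<cdot> x) \<cdot> a \<cdot> (x \<cdot> x) \<cdot> (z \<cdot> z) \<cdot> b \<cdot> (z \<cdot> z))
        = (x \<cdot> x) \<cdot> a \<cdot> (x \<cdot> x) \<cdot> (z \<cdot> z) \<cdot> b \<cdot> (z \<cdot> z)"
      if "a \<in> C" "b \<in> C" for a b
      using satisfies_assign4[OF s5[unfolded idempotent_word_def] C(1) that(1) C(3) that(2)] that C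
      by (simp add: assign4_def)
    show "(x \<cdot> x) \<cdot> a \<cdot> (x \<cdot> x) \<cdot> (z \<cdot> z) \<cdot> b \<cdot> (x \<cdot> x)
        = (x \<cdot> x) \<cdot> a \<cdot> (x \<cdot> x) \<cdot> (z \<cdot> z) \<cdot> b \<cdot> (x \<cdot> x) \<cdot> (z \<cdot> z)"
      if "a \<in> C" "b \<in> C" for a b
      using satisfies_assign4[OF s6 C(1) that(1) C(3) that(2)] that C by (simp add: assign4_def)
    show "(z \<cdot> z) \<cdot> a \<cdot> (x \<cdot> x) \<cdot> (z \<cdot> z) \<cdot> b \<cdot> (z \<cdot> z)
        = (z \<cdot> z) \<cdot> a \<cdot> (x \<cdot> x) \<cdot> (z \<cdot> z) \<cdot> b \<cdot> (z \<cdot> z) \<cdot> (x \<cdot> x)"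
      if "a \<in> C" "b \<in> C" for a b
      using satisfies_assign4[OF s7 C(1) that(1) C(3) that(2)] that C by (simp add: assign4_def)
  qed
qed

end

lemma B0_divides_if_fails_x2yz2_idempotent:
  assumes "T \<in> models B0_identities" "\<not> satisfies T x2yz2_idempotent"
  shows "divides B0 T"
proof (cases T)
  case (Pair C m)
  then have "semigroup_carrier C m"
    using assms(1) by (auto simp: models_def finite_sg_def intro: semigroup_carrier_if_semigroup_on)
  then show ?thesis
    using semigroup_carrier.B0_divides_carrier_if_fails_x2yz2_idempotent assms Pair
    by (auto simp: models_def)
qed

lemma strictly_join_irreducible_pv_gen_B0: "strictly_join_irreducible (pv_gen B0)"
  unfolding strictly_join_irreducible_def
proof (intro allI impI)
  fix X assume X: "\<forall>W\<in>X. pseudovariety W" and eq: "pv_gen B0 = pv_join X"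
  show "pv_gen B0 \<in> X"
  proof (rule ccontr)
    assume not_in: "pv_gen B0 \<notin> X"
    have no_B0: "B0 \<notin> W" if "W \<in> X" for W
    proof
      assume "B0 \<in> W"
      then have "pv_gen B0 \<subseteq> W" using pv_gen_least X that by blast
      moreover have "W \<subseteq> pv_gen B0" using pv_join_upper[OF that] eq by simp
      ultimately show False using not_in that by auto
    qed
    have in_models: "pv_gen B0 \<subseteq> models B0_identities"
      by (rule pv_gen_least[OF pseudovariety_models B0_models_B0_identities])
    have "W \<subseteq> models {x2yz2_idempotent}" if W: "W \<in> X" for W
    proof
      fix T assume "T \<in> W"
      then have T: "T \<in> models B0_identities" using in_models pv_join_upper[OF W] eq by blast
      have "satisfies T x2yz2_idempotent"
      proof (rule ccontr)
        assume "\<not> satisfies T x2yz2_idempotent"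
        then have "B0 \<in> W"
          using pseudovariety_divisor B0_divides_if_fails_x2yz2_idempotent[OF T] finite_sg_B0
            X W \<open>T \<in> W\<close> by blast
        then show False using no_B0[OF W] by contradiction
      qed
      then show "T \<in> models {x2yz2_idempotent}" using T by (simp add: models_def)
    qed
    then have "pv_join X \<subseteq> models {x2yz2_idempotent}"
      by (intro pv_join_least pseudovariety_models) blast
    moreover have "B0 \<notin> models {x2yz2_idempotent}"
      using B0_fails_x2yz2_idempotent by (simp add: models_def)
    ultimately show False using pv_gen_generator[of B0] eq by blast
  qed
qed

section \<open>The submonoids \<open>{0, a, e, 1}\<close> and \<open>{0, a, f, 1}\<close> of \<open>B0\<^sup>I\<close>\<close>

definition B0I_without_f :: "nat sgrp" where "B0I_without_f = ({0, 1, 2, 4}, snd B0I)"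
definition B0I_without_e :: "nat sgrp" where "B0I_without_e = ({0, 1, 3, 4}, snd B0I)"

lemma snd_B0I: "snd B0I x y = (if x = 4 then y else if y = 4 then x else B0_mult x y)"
  by (simp add: B0I_def)

lemma finite_sg_B0I_without_f: "finite_sg B0I_without_f"
  unfolding finite_sg_def semigroup_on_def B0I_without_f_def snd_B0I by simp

lemma finite_sg_B0I_without_e: "finite_sg B0I_without_e"
  unfolding finite_sg_def semigroup_on_def B0I_without_e_def snd_B0I by simp

definition xyx_eq_yxx :: "sg_term \<times> sg_term" where "xyx_eq_yxx = (word [0,1,0], word [1,0,0])"
definition xyx_eq_xxy :: "sg_term \<times> sg_term" where "xyx_eq_xxy = (word [0,1,0], word [0,0,1])"

lemma B0I_without_f_models: "B0I_without_f \<in> models {xyx_eq_yxx}"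
proof -
  have "satisfies B0I_without_f xyx_eq_yxx" unfolding xyx_eq_yxx_def
    by (rule satisfies_if_assign4) (simp_all add: B0I_without_f_def snd_B0I assign4_def)
  then show ?thesis using finite_sg_B0I_without_f by (simp add: models_def)
qed

lemma B0I_without_e_models: "B0I_without_e \<in> models {xyx_eq_xxy}"
proof -
  have "satisfies B0I_without_e xyx_eq_xxy" unfolding xyx_eq_xxy_def
    by (rule satisfies_if_assign4) (simp_all add: B0I_without_e_def snd_B0I assign4_def)
  then show ?thesis using finite_sg_B0I_without_e by (simp add: models_def)
qed

lemma B0_B0I_fail_xyx_eq_yxx: "S \<in> {B0, B0I} \<Longrightarrow> S \<notin> models {xyx_eq_yxx}"
  using satisfies_assign4[of "fst S" "snd S" "word [0,1,0]" "word [1,0,0]" 3 1 0 0]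
  by (auto simp: models_def xyx_eq_yxx_def B0_def B0I_def assign4_def)

lemma B0_B0I_fail_xyx_eq_xxy: "S \<in> {B0, B0I} \<Longrightarrow> S \<notin> models {xyx_eq_xxy}"
  using satisfies_assign4[of "fst S" "snd S" "word [0,1,0]" "word [0,0,1]" 2 1 0 0]
  by (auto simp: models_def xyx_eq_xxy_def B0_def B0I_def assign4_def)

text \<open>Inside the product, \<open>e = (e, 1)\<close>, \<open>f = (1, f)\<close>, \<open>a = (a, a)\<close>, and \<open>0\<close> is the ideal
  \<open>{(0, 0), (0, a), (a, 0)}\<close>; for \<open>B0\<^sup>I\<close> the identity \<open>(1, 1)\<close> is added.\<close>
definition pair_to_B0I :: "nat \<times> nat \<Rightarrow> nat" where
  "pair_to_B0I p = (if p = (4, 4) then 4 else if p = (2, 4) then 2 else if p = (4, 3) then 3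
     else if p = (1, 1) then 1 else 0)"

lemma B0_divides_prod: "divides B0 (sg_prod B0I_without_f B0I_without_e)"
  unfolding divides_def
  by (rule exI[of _ "{(0,0), (0,1), (1,0), (1,1), (2,3), (2,4), (4,3)}"], rule exI[of _ pair_to_B0I])
    (auto simp: sg_prod_def B0I_without_f_def B0I_without_e_def snd_B0I sg_hom_def B0_def
      pair_to_B0I_def)

lemma B0I_divides_prod: "divides B0I (sg_prod B0I_without_f B0I_without_e)"
  unfolding divides_def
  by (rule exI[of _ "{(0,0), (0,1), (1,0), (1,1), (2,3), (2,4), (4,3), (4,4)}"],
      rule exI[of _ pair_to_B0I])
    (auto simp: sg_prod_def B0I_without_f_def B0I_without_e_def snd_B0I sg_hom_def B0I_def
      pair_to_B0I_def)

lemma not_join_irreducible_pv_gen_B0: "\<not> join_irreducible (pv_gen B0)"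
proof -
  let ?X = "{models {xyx_eq_yxx}, models {xyx_eq_xxy}}"
  have X: "\<forall>W\<in>?X. pseudovariety W" using pseudovariety_models by blast
  have "B0 \<in> W" if W: "pseudovariety W" and "\<Union>?X \<subseteq> W" for W
  proof -
    have "B0I_without_f \<in> W" "B0I_without_e \<in> W"
      using \<open>\<Union>?X \<subseteq> W\<close> B0I_without_f_models B0I_without_e_models by auto
    then show ?thesis by (rule pseudovariety_divisor_of_prod[OF W _ _ finite_sg_B0 B0_divides_prod])
  qed
  then have "pv_gen B0 \<subseteq> pv_join ?X"
    unfolding pv_join_def by (intro Inter_greatest) (simp add: pv_gen_least)
  moreover have "B0 \<notin> models {xyx_eq_yxx}" "B0 \<notin> models {xyx_eq_xxy}"
    by (simp_all add: B0_B0I_fail_xyx_eq_yxx B0_B0I_fail_xyx_eq_xxy)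
  then have "\<not> pv_gen B0 \<subseteq> W" if "W \<in> ?X" for W
    using that pv_gen_generator[of B0] by auto
  ultimately show ?thesis unfolding join_irreducible_def using X by blast
qed

lemma not_strictly_join_irreducible_pv_gen_B0I: "\<not> strictly_join_irreducible (pv_gen B0I)"
proof -
  let ?X = "{pv_gen B0I_without_f, pv_gen B0I_without_e}"
  have X: "\<forall>W\<in>?X. pseudovariety W"
    using pseudovariety_pv_gen finite_sg_B0I_without_f finite_sg_B0I_without_e by blast
  have pv_B0I: "pseudovariety (pv_gen B0I)" by (rule pseudovariety_pv_gen[OF finite_sg_B0I])
  have "divides B0I_without_f B0I" "divides B0I_without_e B0I"
    unfolding B0I_without_f_def B0I_without_e_def
    by (rule subsemigroup_divides; force simp: B0I_def)+
  then have "B0I_without_f \<in> pv_gen B0I" "B0I_without_e \<in> pv_gen B0I"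
    using divides_pv_gen finite_sg_B0I_without_f finite_sg_B0I_without_e by blast+
  then have "\<Union>?X \<subseteq> pv_gen B0I"
    using pv_gen_least[OF pv_B0I] by simp
  then have "pv_join ?X \<subseteq> pv_gen B0I"
    by (rule pv_join_least[OF pv_B0I])
  moreover have "B0I \<in> W" if W: "pseudovariety W" and "\<Union>?X \<subseteq> W" for W
  proof -
    have "B0I_without_f \<in> W" "B0I_without_e \<in> W"
      using \<open>\<Union>?X \<subseteq> W\<close> pv_gen_generator[of B0I_without_f] pv_gen_generator[of B0I_without_e]
      by auto
    then show ?thesis
      by (rule pseudovariety_divisor_of_prod[OF W _ _ finite_sg_B0I B0I_divides_prod])
  qed
  then have "pv_gen B0I \<subseteq> pv_join ?X"
    unfolding pv_join_def by (intro Inter_greatest) (simp add: pv_gen_least)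
  moreover have "B0I \<notin> models {xyx_eq_yxx}" "B0I \<notin> models {xyx_eq_xxy}"
    by (simp_all add: B0_B0I_fail_xyx_eq_yxx B0_B0I_fail_xyx_eq_xxy)
  then have "B0I \<notin> pv_gen B0I_without_f" "B0I \<notin> pv_gen B0I_without_e"
    using pv_gen_least[OF pseudovariety_models B0I_without_f_models]
      pv_gen_least[OF pseudovariety_models B0I_without_e_models] by auto
  then have "pv_gen B0I \<notin> ?X" using pv_gen_generator[of B0I] by auto
  ultimately show ?thesis
    unfolding strictly_join_irreducible_def using X by blast
qed

theorem proposition3p1:
  shows "strictly_join_irreducible (pv_gen B0) \<and>
         \<not> join_irreducible (pv_gen B0) \<and>
         \<not> strictly_join_irreducible (pv_gen B0I)"
  using strictly_join_irreducible_pv_gen_B0 not_join_irreducible_pv_gen_B0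
    not_strictly_join_irreducible_pv_gen_B0I by blast

end
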